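(* Fix the following data: - a power vector $\bm{p}\in\mathbb{R}^n_{>0}$ and a demand vector $\bm{d}\in\mathbb{R}^m_{>0}$; - an association $\kappa$ in which every UE is served by at least one cell and every cell serves at least one UE; - a UE $u$ and a cell $c\notin\mathcal{I}_u$. Let $\tilde{\bm{x}}\in\mathbb{R}^n_{\ge0}$ satisfy $\tilde{\bm{x}}=\bm{f}(\bm{h}(\tilde{\bm{x}}))$, and let $\bm{x}\in\mathbb{R}^n_{\ge0}$ satisfy $\bm{x}=\bm{f}^+(\bm{h}^+(\bm{x}))$. Define the iteration $\bm{x}^{(0)}=\tilde{\bm{x}}$ and $\bm{x}^{(k)}=\bm{f}(\bm{h}^+(\bm{x}^{(k-1)}))$ for $k\ge1$. If there exists $k\ge1$ with $f^+_c(\bm{h}^+(\bm{x}^{(k)}))\le x^{(k)}_c$, then $\bm{x}\le\tilde{\bm{x}}$, that is, $x_i\le\tilde{x}_i$ for all $i\in\mathcal{I}$ and $\bm{x}\ne\tilde{\bm{x}}$.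
   Context: Cellular network model. $\mathcal{I}$ is a set of $n$ cells and $\mathcal{J}$ a set of $m$ UEs. The association $\kappa\in\{0,1\}^{n\times m}$ gives $\mathcal{I}_j=\{i:\kappa_{ij}=1\}$ and $\mathcal{J}_i=\{j:\kappa_{ij}=1\}$. $M,B>0$ are constants, $\sigma^2>0$ is the noise power and $g_{ij}>0$ are the channel gains. With $\bm{p},\bm{d}$ fixed, define for $\bm{x}\in\mathbb{R}^n_{\ge0}$ and $\bm{\gamma}\in\mathbb{R}^m_{>0}$ the maps before adding the link: - $h_j(\bm{x})=\dfrac{\sum_{i\in\mathcal{I}_j}p_ig_{ij}}{\sum_{k\in\mathcal{I}\setminus\mathcal{I}_j}p_kg_{kj}x_k+\sigma^2}$; - $f_i(\bm{\gamma})=\sum_{j\in\mathcal{J}_i}\dfrac{d_j}{MB\log_2(1+\gamma_j)}$. The maps after letting cell $c$ additionally serve UE $u$ are: - $h^+_u(\bm{x})=\dfrac{\sum_{i\in\mathcal{I}_u\cup\{c\}}p_ig_{iu}}{\sum_{k\in\mathcal{I}\setminus(\mathcal{I}_u\cup\{c\})}p_kg_{ku}x_k+\sigma^2}$, and $h^+_j=h_j$ for $j\ne u$; - $f^+_c(\bm{\gamma})=\sum_{j\in\mathcal{J}_c\cup\{u\}}\dfrac{d_j}{MB\log_2(1+\gamma_j)}$, and $f^+_i=f_i$ for $i\ne c$. Vectors are $\bm{h}=(h_j)_j$, $\bm{f}=(f_i)_i$, and similarly for $\bm{h}^+$ and $\bm{f}^+$. It is known, and assumed here, that $\bm{f}\circ\bm{h}$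 and $\bm{f}^+\circ\bm{h}^+$ are standard interference functions, each with a unique fixed point. The vector inequality $\bm{x}\le\tilde{\bm{x}}$ means componentwise $\le$ with strict inequality in at least one component. *)

theory Defs
  imports Complex_Main
begin

(* Cells are the elements of a finite type 'c (the set \<I> = UNIV),
   UEs are the elements of a finite type 'u (the set \<J> = UNIV).
   The association \<kappa> is a Boolean relation: \<kappa> i j \<longleftrightarrow> \<kappa>_ij = 1. *)

definition cells_of :: "('c \<Rightarrow> 'u \<Rightarrow> bool) \<Rightarrow> 'u \<Rightarrow> 'c set" where
  "cells_of \<kappa> j = {i. \<kappa> i j}"

definition ues_of :: "('c \<Rightarrow> 'u \<Rightarrow> bool) \<Rightarrow> 'c \<Rightarrow> 'u set" where
  "ues_of \<kappa> i = {j. \<kappa> i j}"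

definition hmap :: "('c::finite \<Rightarrow> 'u \<Rightarrow> bool) \<Rightarrow> ('c \<Rightarrow> real) \<Rightarrow> ('c \<Rightarrow> 'u \<Rightarrow> real)
                    \<Rightarrow> real \<Rightarrow> ('c \<Rightarrow> real) \<Rightarrow> 'u \<Rightarrow> real" where
  "hmap \<kappa> p g \<sigma>2 x j =
     (\<Sum>i\<in>cells_of \<kappa> j. p i * g i j) /
     ((\<Sum>k\<in>UNIV - cells_of \<kappa> j. p k * g k j * x k) + \<sigma>2)"

definition fmap :: "('c \<Rightarrow> 'u::finite \<Rightarrow> bool) \<Rightarrow> ('u \<Rightarrow> real) \<Rightarrow> real \<Rightarrow> real
                    \<Rightarrow> ('u \<Rightarrow> real) \<Rightarrow> 'c \<Rightarrow> real" where
  "fmap \<kappa> d M B \<gamma> i = (\<Sum>j\<in>ues_of \<kappa> i. d j / (M * B * log 2 (1 + \<gamma> j)))"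

(* association after letting cell c additionally serve UE u;
   then h^+ = hmap (add_link \<kappa> c u) ... and f^+ = fmap (add_link \<kappa> c u) ... *)
definition add_link :: "('c \<Rightarrow> 'u \<Rightarrow> bool) \<Rightarrow> 'c \<Rightarrow> 'u \<Rightarrow> ('c \<Rightarrow> 'u \<Rightarrow> bool)" where
  "add_link \<kappa> c u = (\<lambda>i j. \<kappa> i j \<or> (i = c \<and> j = u))"

end

theory Submission imports Defs "HOL-Analysis.Analysis" begin

text \<open>
  The iteration x(k) = f(h+(x(k-1))) starts at the old fixed point and decreases, because
  adding the link only raises the SINR of u; already its first step strictly lowers the load
  of every cell serving u. Off the cell c the maps f and f+ coincide, so together with the
  hypothesis at c the iterate x(k) satisfies f+(h+(x(k))) <= x(k). For the monotone and
  strictly scalable map f+ o h+ such a point dominates every fixed point: the largest ratio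
  x_i / x(k)_i cannot exceed 1.
\<close>

lemma fixed_point_le_subfixed_point:
  fixes T :: "('c::finite \<Rightarrow> real) \<Rightarrow> 'c \<Rightarrow> real"
  assumes mono: "\<And>y y' i. \<forall>i. 0 \<le> y i \<Longrightarrow> \<forall>i. y i \<le> y' i \<Longrightarrow> T y i \<le> T y' i"
    and scalable: "\<And>y a i. \<forall>i. 0 \<le> y i \<Longrightarrow> 1 < a \<Longrightarrow> T (\<lambda>i. a * y i) i < a * T y i"
    and x_nonneg: "\<forall>i. 0 \<le> x i" and x_fixed: "T x = x"
    and y_pos: "\<forall>i. 0 < y i" and y_sub: "\<forall>i. T y i \<le> y i"
  shows "x i \<le> y i"
proof -
  define a where "a = Max (range (\<lambda>i. x i / y i))"
  have x_le: "x i \<le> a * y i" for i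
  proof -
    have "x i / y i \<le> a" unfolding a_def by (rule Max_ge) auto
    thus ?thesis using y_pos by (simp add: pos_divide_le_eq mult.commute)
  qed
  have "a \<le> 1"
  proof (rule ccontr)
    assume "\<not> a \<le> 1"
    have "a \<in> range (\<lambda>i. x i / y i)" unfolding a_def by (rule Max_in) auto
    then obtain j where "x j / y j = a" by blast
    moreover have "0 < y j" using y_pos by blast
    ultimately have x_eq: "x j = a * y j" by (simp add: divide_eq_eq)
    have "x j = T x j" using x_fixed by simp
    also have "\<dots> \<le> T (\<lambda>i. a * y i) j" by (rule mono) (use x_nonneg x_le in auto)
    also have "\<dots> < a * T y j" by (rule scalable) (use y_pos less_imp_le \<open>\<not> a \<le> 1\<close> in auto)
    also have "\<dots> \<le> a * y j" using y_sub \<open>\<not> a \<le> 1\<close> by simp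
    finally show False using x_eq by simp
  qed
  hence "a * y i \<le> y i"
    using mult_right_mono[of a 1 "y i"] y_pos by (simp add: less_imp_le)
  with x_le show ?thesis by (rule order_trans)
qed

lemma funpow_antimono:
  fixes G :: "('c \<Rightarrow> real) \<Rightarrow> 'c \<Rightarrow> real"
  assumes mono: "\<And>y y' i. \<forall>i. 0 \<le> y i \<Longrightarrow> \<forall>i. y i \<le> y' i \<Longrightarrow> G y i \<le> G y' i"
    and nonneg: "\<And>y i. \<forall>i. 0 \<le> y i \<Longrightarrow> 0 \<le> G y i"
    and x0_nonneg: "\<forall>i. 0 \<le> x0 i" and first_step: "\<forall>i. G x0 i \<le> x0 i"
    and "m \<le> k"
  shows "(G ^^ k) x0 i \<le> (G ^^ m) x0 i"
proof -
  have iter_nonneg: "\<forall>i. 0 \<le> (G ^^ n) x0 i" for n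
    by (induction n) (use x0_nonneg nonneg in auto)
  have step: "\<forall>i. (G ^^ Suc n) x0 i \<le> (G ^^ n) x0 i" for n
  proof (induction n)
    case (Suc n)
    then show ?case using mono[OF iter_nonneg[of "Suc n"]] by simp
  qed (use first_step in simp)
  have "decseq (\<lambda>n. (G ^^ n) x0)"
    using step by (intro decseq_SucI) (simp add: le_fun_def)
  from decseqD[OF this \<open>m \<le> k\<close>] show ?thesis by (simp add: le_fun_def)
qed

lemma log_div_le_log_one_plus_div:
  fixes a b t :: real
  assumes "1 < b" "1 \<le> a" "0 \<le> t"
  shows "log b (1 + t) / a \<le> log b (1 + t / a)"
proof -
  have "(1 - 1 / a) * ln 1 + (1 / a) * ln (1 + t) \<le> ln ((1 - 1 / a) *\<^sub>R 1 + (1 / a) *\<^sub>R (1 + t))"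
    using assms by (intro concave_onD[OF ln_concave]) auto
  also have "(1 - 1 / a) *\<^sub>R 1 + (1 / a) *\<^sub>R (1 + t) = 1 + t / a"
    using assms by (simp add: field_simps)
  finally have "ln (1 + t) / a \<le> ln (1 + t / a)" by simp
  from divide_right_mono[OF this, of "ln b"] show ?thesis
    using assms by (simp add: log_def mult.commute)
qed

locale cellular_network =
  fixes p :: "'c::finite \<Rightarrow> real" and g :: "'c \<Rightarrow> 'u::finite \<Rightarrow> real" and \<sigma>2 :: real
    and d :: "'u \<Rightarrow> real" and M B :: real
  assumes p_pos: "\<And>i. 0 < p i" and g_pos: "\<And>i j. 0 < g i j" and noise_pos: "0 < \<sigma>2"
    and d_pos: "\<And>j. 0 < d j" and M_pos: "0 < M" and B_pos: "0 < B"
begin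

text \<open>The paper's h and f for the association \<kappa> are sinr \<kappa> and load \<kappa>; load_map \<kappa> is
  f \<circ> h, and link_iteration \<kappa> c u is the map f \<circ> h+ generating the iterates x(k).\<close>

abbreviation sinr :: "('c \<Rightarrow> 'u \<Rightarrow> bool) \<Rightarrow> ('c \<Rightarrow> real) \<Rightarrow> 'u \<Rightarrow> real" where
  "sinr \<kappa> \<equiv> hmap \<kappa> p g \<sigma>2"

abbreviation load :: "('c \<Rightarrow> 'u \<Rightarrow> bool) \<Rightarrow> ('u \<Rightarrow> real) \<Rightarrow> 'c \<Rightarrow> real" where
  "load \<kappa> \<equiv> fmap \<kappa> d M B"

abbreviation load_map :: "('c \<Rightarrow> 'u \<Rightarrow> bool) \<Rightarrow> ('c \<Rightarrow> real) \<Rightarrow> 'c \<Rightarrow> real" where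
  "load_map \<kappa> \<equiv> \<lambda>y. load \<kappa> (sinr \<kappa> y)"

abbreviation link_iteration :: "('c \<Rightarrow> 'u \<Rightarrow> bool) \<Rightarrow> 'c \<Rightarrow> 'u \<Rightarrow> ('c \<Rightarrow> real) \<Rightarrow> 'c \<Rightarrow> real" where
  "link_iteration \<kappa> c u \<equiv> \<lambda>y. load \<kappa> (sinr (add_link \<kappa> c u) y)"

lemma cost_antimono:
  assumes "0 < \<gamma>" "\<gamma> \<le> \<gamma>'"
  shows "d j / (M * B * log 2 (1 + \<gamma>')) \<le> d j / (M * B * log 2 (1 + \<gamma>))"
  using assms d_pos[of j] M_pos B_pos by (intro divide_left_mono) auto

lemma cost_strict_antimono:
  assumes "0 < \<gamma>" "\<gamma> < \<gamma>'"
  shows "d j / (M * B * log 2 (1 + \<gamma>')) < d j / (M * B * log 2 (1 + \<gamma>))"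
  using assms d_pos[of j] M_pos B_pos by (intro divide_strict_left_mono) auto

lemma cost_scale_less:
  assumes "0 < \<gamma>" "1 < a" "\<gamma> / a < \<gamma>'"
  shows "d j / (M * B * log 2 (1 + \<gamma>')) < a * (d j / (M * B * log 2 (1 + \<gamma>)))"
proof -
  have "0 < log 2 (1 + \<gamma>) / a" using assms by simp
  have "log 2 (1 + \<gamma>) / a \<le> log 2 (1 + \<gamma> / a)"
    using assms by (intro log_div_le_log_one_plus_div) auto
  also have "\<dots> < log 2 (1 + \<gamma>')"
    using assms by (intro log_less) (auto simp: add_pos_pos)
  finally have "d j / (M * B * log 2 (1 + \<gamma>')) < d j / (M * B * (log 2 (1 + \<gamma>) / a))"
    using \<open>0 < log 2 (1 + \<gamma>) / a\<close> d_pos[of j] M_pos B_pos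
    by (intro divide_strict_left_mono mult_strict_left_mono mult_pos_pos) auto
  also have "\<dots> = a * (d j / (M * B * log 2 (1 + \<gamma>)))" using assms by simp
  finally show ?thesis .
qed

lemma signal_pos: "\<exists>i. \<kappa> i j \<Longrightarrow> 0 < (\<Sum>i\<in>cells_of \<kappa> j. p i * g i j)"
  using p_pos g_pos by (intro sum_pos) (auto simp: cells_of_def)

lemma interference_nonneg: "\<forall>i. 0 \<le> x i \<Longrightarrow> 0 \<le> (\<Sum>k\<in>A. p k * g k j * x k)"
  using p_pos g_pos by (intro sum_nonneg) (simp add: less_imp_le)

lemma sinr_pos:
  assumes "\<exists>i. \<kappa> i j" "\<forall>i. 0 \<le> x i"
  shows "0 < sinr \<kappa> x j"
  unfolding hmap_def using assms signal_pos interference_nonneg noise_pos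
  by (intro divide_pos_pos add_nonneg_pos) auto

lemma sinr_antimono:
  assumes "\<exists>i. \<kappa> i j" "\<forall>i. 0 \<le> x i" "\<forall>i. x i \<le> y i"
  shows "sinr \<kappa> y j \<le> sinr \<kappa> x j"
proof -
  have "(\<Sum>k\<in>UNIV - cells_of \<kappa> j. p k * g k j * x k) \<le> (\<Sum>k\<in>UNIV - cells_of \<kappa> j. p k * g k j * y k)"
    using assms p_pos g_pos by (intro sum_mono mult_left_mono) (auto simp: less_imp_le)
  with signal_pos[of \<kappa> j, OF assms(1)] interference_nonneg[OF assms(2), of j "UNIV - cells_of \<kappa> j"] noise_pos
  show ?thesis
    unfolding hmap_def by (intro divide_left_mono) (auto intro!: mult_pos_pos add_nonneg_pos)
qed

lemma sinr_scale_less: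
  assumes "\<exists>i. \<kappa> i j" "\<forall>i. 0 \<le> y i" "1 < a"
  shows "sinr \<kappa> y j / a < sinr \<kappa> (\<lambda>i. a * y i) j"
proof -
  define S where "S = (\<Sum>i\<in>cells_of \<kappa> j. p i * g i j)"
  define I where "I = (\<Sum>k\<in>UNIV - cells_of \<kappa> j. p k * g k j * y k)"
  have "0 < S" "0 \<le> I"
    unfolding S_def I_def using assms signal_pos interference_nonneg by auto
  have "sinr \<kappa> y j / a = S / (a * I + a * \<sigma>2)"
    using assms by (simp add: hmap_def S_def I_def field_simps)
  also have "\<dots> < S / (a * I + \<sigma>2)"
    using \<open>0 < S\<close> \<open>0 \<le> I\<close> assms noise_pos
    by (intro divide_strict_left_mono) (auto intro!: add_nonneg_pos mult_pos_pos)
  also have "\<dots> = sinr \<kappa> (\<lambda>i. a * y i) j"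
    by (simp add: hmap_def S_def I_def sum_distrib_left algebra_simps)
  finally show ?thesis .
qed

lemma sinr_add_link_other: "j \<noteq> u \<Longrightarrow> sinr (add_link \<kappa> c u) x j = sinr \<kappa> x j"
  by (simp add: hmap_def cells_of_def add_link_def)

lemma sinr_add_link_less:
  assumes "\<exists>i. \<kappa> i u" "c \<notin> cells_of \<kappa> u" "\<forall>i. 0 \<le> x i"
  shows "sinr \<kappa> x u < sinr (add_link \<kappa> c u) x u"
proof -
  define S where "S = (\<Sum>i\<in>cells_of \<kappa> u. p i * g i u)"
  define I where "I = (\<Sum>k\<in>UNIV - insert c (cells_of \<kappa> u). p k * g k u * x k)"
  have "0 < S" "0 \<le> I"
    unfolding S_def I_def using assms signal_pos interference_nonneg by auto
  have cells_plus: "cells_of (add_link \<kappa> c u) u = insert c (cells_of \<kappa> u)"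
    by (auto simp: cells_of_def add_link_def)
  have "UNIV - cells_of \<kappa> u = insert c (UNIV - insert c (cells_of \<kappa> u))"
    using assms(2) by blast
  hence "sinr \<kappa> x u = S / (p c * g c u * x c + I + \<sigma>2)"
    by (simp add: hmap_def S_def I_def)
  also have "\<dots> \<le> S / (I + \<sigma>2)"
    using \<open>0 < S\<close> \<open>0 \<le> I\<close> assms(3) noise_pos p_pos[of c] g_pos[of c u]
    by (intro divide_left_mono) (auto intro!: add_nonneg_pos mult_pos_pos)
  also have "\<dots> < (p c * g c u + S) / (I + \<sigma>2)"
    using \<open>0 \<le> I\<close> noise_pos p_pos[of c] g_pos[of c u] by (intro divide_strict_right_mono) auto
  also have "\<dots> = sinr (add_link \<kappa> c u) x u"
    using assms(2) by (simp add: hmap_def cells_plus S_def I_def)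
  finally show ?thesis .
qed

lemma sinr_le_add_link:
  assumes "\<forall>j. \<exists>i. \<kappa> i j" "c \<notin> cells_of \<kappa> u" "\<forall>i. 0 \<le> x i"
  shows "sinr \<kappa> x j \<le> sinr (add_link \<kappa> c u) x j"
  using assms sinr_add_link_less[of \<kappa> u c x] sinr_add_link_other[of j u \<kappa> c x]
  by (cases "j = u") auto

lemma load_antimono:
  assumes "\<forall>j. 0 < \<gamma> j" "\<forall>j. \<gamma> j \<le> \<gamma>' j"
  shows "load \<kappa> \<gamma>' i \<le> load \<kappa> \<gamma> i"
  unfolding fmap_def using assms by (intro sum_mono cost_antimono) auto

lemma load_pos:
  assumes "\<exists>j. \<kappa> i j" "\<forall>j. 0 < \<gamma> j"
  shows "0 < load \<kappa> \<gamma> i"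
  unfolding fmap_def using assms d_pos M_pos B_pos
  by (intro sum_pos divide_pos_pos mult_pos_pos) (auto simp: ues_of_def add_pos_pos)

lemma load_add_link_other: "i \<noteq> c \<Longrightarrow> load (add_link \<kappa> c u) \<gamma> i = load \<kappa> \<gamma> i"
  by (simp add: fmap_def ues_of_def add_link_def)

lemma load_sinr_pos:
  assumes "\<exists>j. \<kappa> i j" "\<forall>j. \<exists>i. \<kappa>' i j" "\<forall>i. 0 \<le> x i"
  shows "0 < load \<kappa> (sinr \<kappa>' x) i"
  using assms by (intro load_pos) (auto intro: sinr_pos)

lemma load_sinr_mono:
  assumes "\<forall>j. \<exists>i. \<kappa>' i j" "\<forall>i. 0 \<le> x i" "\<forall>i. x i \<le> y i"
  shows "load \<kappa> (sinr \<kappa>' x) i \<le> load \<kappa> (sinr \<kappa>' y) i"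
proof -
  have "\<forall>i. 0 \<le> y i" using assms order_trans by blast
  then show ?thesis using assms by (intro load_antimono) (auto intro: sinr_pos sinr_antimono)
qed

lemma load_sinr_scale_less:
  assumes "\<exists>j. \<kappa> i j" "\<forall>j. \<exists>i. \<kappa> i j" "\<forall>i. 0 \<le> y i" "1 < a"
  shows "load \<kappa> (sinr \<kappa> (\<lambda>i. a * y i)) i < a * load \<kappa> (sinr \<kappa> y) i"
  unfolding fmap_def sum_distrib_left using assms
  by (intro sum_strict_mono cost_scale_less sinr_pos sinr_scale_less) (auto simp: ues_of_def)

lemma load_sinr_add_link_le:
  assumes "\<forall>j. \<exists>i. \<kappa> i j" "c \<notin> cells_of \<kappa> u" "\<forall>i. 0 \<le> x i"
  shows "load \<kappa> (sinr (add_link \<kappa> c u) x) i \<le> load \<kappa> (sinr \<kappa> x) i"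
  using assms by (intro load_antimono) (auto intro: sinr_pos sinr_le_add_link)

lemma load_sinr_add_link_less:
  assumes "\<forall>j. \<exists>i. \<kappa> i j" "c \<notin> cells_of \<kappa> u" "\<forall>i. 0 \<le> x i" "\<kappa> i u"
  shows "load \<kappa> (sinr (add_link \<kappa> c u) x) i < load \<kappa> (sinr \<kappa> x) i"
  unfolding fmap_def
proof (rule sum_strict_mono_ex1)
  show "\<forall>j\<in>ues_of \<kappa> i. d j / (M * B * log 2 (1 + sinr (add_link \<kappa> c u) x j))
      \<le> d j / (M * B * log 2 (1 + sinr \<kappa> x j))"
    using assms by (intro ballI cost_antimono sinr_pos sinr_le_add_link) auto
  show "\<exists>j\<in>ues_of \<kappa> i. d j / (M * B * log 2 (1 + sinr (add_link \<kappa> c u) x j))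
      < d j / (M * B * log 2 (1 + sinr \<kappa> x j))"
    using assms
    by (auto simp: ues_of_def intro!: bexI[of _ u] cost_strict_antimono sinr_pos sinr_add_link_less)
qed simp

lemma load_map_fixed_point_le:
  assumes "\<forall>j. \<exists>i. \<kappa> i j" "\<forall>i. \<exists>j. \<kappa> i j"
    and "\<forall>i. 0 \<le> x i" "load_map \<kappa> x = x"
    and "\<forall>i. 0 < y i" "\<forall>i. load_map \<kappa> y i \<le> y i"
  shows "x i \<le> y i"
proof (rule fixed_point_le_subfixed_point[of "load_map \<kappa>"])
  show "\<And>y y' i. \<forall>i. 0 \<le> y i \<Longrightarrow> \<forall>i. y i \<le> y' i \<Longrightarrow> load_map \<kappa> y i \<le> load_map \<kappa> y' i"
    using assms(1) by (rule load_sinr_mono)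
  show "\<And>y a i. \<forall>i. 0 \<le> y i \<Longrightarrow> 1 < a \<Longrightarrow> load_map \<kappa> (\<lambda>i. a * y i) i < a * load_map \<kappa> y i"
    using assms(1,2) by (intro load_sinr_scale_less) auto
qed (use assms in auto)

lemma link_iteration_pos:
  assumes "\<forall>j. \<exists>i. \<kappa> i j" "\<forall>i. \<exists>j. \<kappa> i j" "\<forall>i. 0 \<le> y i"
  shows "0 < link_iteration \<kappa> c u y i"
  using assms by (intro load_sinr_pos) (auto simp: add_link_def)

lemma link_iteration_funpow_antimono:
  assumes "\<forall>j. \<exists>i. \<kappa> i j" "\<forall>i. \<exists>j. \<kappa> i j" "c \<notin> cells_of \<kappa> u"
    and "\<forall>i. 0 \<le> x i" "load_map \<kappa> x = x" "m \<le> n"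
  shows "(link_iteration \<kappa> c u ^^ n) x i \<le> (link_iteration \<kappa> c u ^^ m) x i"
proof (rule funpow_antimono[OF _ _ assms(4) _ assms(6)])
  show "\<And>y y' i. \<forall>i. 0 \<le> y i \<Longrightarrow> \<forall>i. y i \<le> y' i
      \<Longrightarrow> link_iteration \<kappa> c u y i \<le> link_iteration \<kappa> c u y' i"
    using assms(1) by (intro load_sinr_mono) (auto simp: add_link_def)
  show "\<And>y i. \<forall>i. 0 \<le> y i \<Longrightarrow> 0 \<le> link_iteration \<kappa> c u y i"
    using assms(1,2) link_iteration_pos less_imp_le by blast
  show "\<forall>i. link_iteration \<kappa> c u x i \<le> x i"
    using load_sinr_add_link_le[OF assms(1,3,4)] assms(5) by metis
qed

lemma link_iteration_funpow_pos:
  assumes "\<forall>j. \<exists>i. \<kappa> i j" "\<forall>i. \<exists>j. \<kappa> i j" "\<forall>i. 0 \<le> x i" "1 \<le> n"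
  shows "0 < (link_iteration \<kappa> c u ^^ n) x i"
proof -
  have "\<forall>i. 0 \<le> (link_iteration \<kappa> c u ^^ m) x i" for m
    by (induction m) (auto simp: assms(3) intro: link_iteration_pos[OF assms(1,2)] less_imp_le)
  then show ?thesis
    using assms(4) link_iteration_pos[OF assms(1,2)] by (cases n) auto
qed

lemma link_iteration_funpow_sub_fixed:
  assumes "\<forall>j. \<exists>i. \<kappa> i j" "\<forall>i. \<exists>j. \<kappa> i j" "c \<notin> cells_of \<kappa> u"
    and "\<forall>i. 0 \<le> x i" "load_map \<kappa> x = x"
    and at_c: "load_map (add_link \<kappa> c u) ((link_iteration \<kappa> c u ^^ n) x) c
      \<le> (link_iteration \<kappa> c u ^^ n) x c"
  shows "load_map (add_link \<kappa> c u) ((link_iteration \<kappa> c u ^^ n) x) i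
    \<le> (link_iteration \<kappa> c u ^^ n) x i"
proof (cases "i = c")
  case False
  then have "load_map (add_link \<kappa> c u) ((link_iteration \<kappa> c u ^^ n) x) i
      = (link_iteration \<kappa> c u ^^ Suc n) x i"
    by (simp add: load_add_link_other)
  also have "\<dots> \<le> (link_iteration \<kappa> c u ^^ n) x i"
    using assms by (intro link_iteration_funpow_antimono) auto
  finally show ?thesis .
qed (use at_c in simp)

end

theorem theorem2:
  fixes \<kappa> :: "'c::finite \<Rightarrow> 'u::finite \<Rightarrow> bool"
    and p :: "'c \<Rightarrow> real" and d :: "'u \<Rightarrow> real" and g :: "'c \<Rightarrow> 'u \<Rightarrow> real"
    and M B \<sigma>2 :: real and u :: 'u and c :: 'c
    and x xt :: "'c \<Rightarrow> real"
  assumes M: "M > 0" and B: "B > 0" and \<sigma>: "\<sigma>2 > 0"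
    and g_pos: "\<forall>i j. g i j > 0"
    and p_pos: "\<forall>i. p i > 0" and d_pos: "\<forall>j. d j > 0"
    and ue_served: "\<forall>j. \<exists>i. \<kappa> i j"
    and cell_serves: "\<forall>i. \<exists>j. \<kappa> i j"
    and c_notin: "c \<notin> cells_of \<kappa> u"
    and xt_nonneg: "\<forall>i. xt i \<ge> 0"
    and xt_fix: "xt = fmap \<kappa> d M B (hmap \<kappa> p g \<sigma>2 xt)"
    and x_nonneg: "\<forall>i. x i \<ge> 0"
    and x_fix: "x = fmap (add_link \<kappa> c u) d M B (hmap (add_link \<kappa> c u) p g \<sigma>2 x)"
    and cond: "\<exists>k\<ge>1.
       fmap (add_link \<kappa> c u) d M B
         (hmap (add_link \<kappa> c u) p g \<sigma>2
            (((\<lambda>y. fmap \<kappa> d M B (hmap (add_link \<kappa> c u) p g \<sigma>2 y)) ^^ k) xt)) c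
       \<le> (((\<lambda>y. fmap \<kappa> d M B (hmap (add_link \<kappa> c u) p g \<sigma>2 y)) ^^ k) xt) c"
  shows "(\<forall>i. x i \<le> xt i) \<and> x \<noteq> xt"
proof -
  interpret cellular_network p g \<sigma>2 d M B using assms by unfold_locales auto
  let ?G = "link_iteration \<kappa> c u"
  obtain k where "1 \<le> k" and at_c:
    "load_map (add_link \<kappa> c u) ((?G ^^ k) xt) c \<le> (?G ^^ k) xt c"
    using cond by blast
  have served_plus: "\<forall>j. \<exists>i. add_link \<kappa> c u i j" and serves_plus: "\<forall>i. \<exists>j. add_link \<kappa> c u i j"
    using ue_served cell_serves by (auto simp: add_link_def)
  have xt_fixed: "load_map \<kappa> xt = xt" using xt_fix by simp
  have x_le: "x i \<le> (?G ^^ k) xt i" for i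
  proof (rule load_map_fixed_point_le[OF served_plus serves_plus x_nonneg x_fix[symmetric]])
    show "\<forall>i. 0 < (?G ^^ k) xt i"
      using link_iteration_funpow_pos[OF ue_served cell_serves xt_nonneg \<open>1 \<le> k\<close>] by blast
    show "\<forall>i. load_map (add_link \<kappa> c u) ((?G ^^ k) xt) i \<le> (?G ^^ k) xt i"
      using link_iteration_funpow_sub_fixed[OF ue_served cell_serves c_notin xt_nonneg xt_fixed at_c]
      by blast
  qed
  have iterate_le: "(?G ^^ k) xt i \<le> ?G xt i" for i
    using link_iteration_funpow_antimono[OF ue_served cell_serves c_notin xt_nonneg xt_fixed \<open>1 \<le> k\<close>]
    by simp
  obtain i0 where "\<kappa> i0 u" using ue_served by blast
  have first_step: "?G xt i \<le> xt i" for i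
    using load_sinr_add_link_le[OF ue_served c_notin xt_nonneg] xt_fixed by metis
  have "?G xt i0 < xt i0"
    using load_sinr_add_link_less[OF ue_served c_notin xt_nonneg \<open>\<kappa> i0 u\<close>] xt_fixed by metis
  then have "x i0 < xt i0"
    using x_le[of i0] iterate_le[of i0] by linarith
  moreover have "x i \<le> xt i" for i
    using x_le[of i] iterate_le[of i] first_step[of i] by linarith
  ultimately show ?thesis by auto
qed

end
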